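(* Let $\mathcal A$ be a linearly ordered $\mathbf{IUL}_\omega$-algebra. Let $B\subseteq A$ be such that $\{e,f,\bot,\top\}\subseteq B$ and $\neg b\in B$ for all $b\in B$. Let $M$, $\bar D$, $D$ and the operations be as described in the context. Then: (i) $(b]=\sim\sim(b]$ for all $b\in B$; (ii) $(a\mapsto b]=\sim\sim(a\mapsto b]$ for all $(a\mapsto b]\in\bar D$; (iii) $X=\sim\sim X$ for all $X\in D$; (iv) $\mathcal D=\langle D,\cdot^D,\to^D,\vee^D,\wedge^D,e^D,f^D,\bot^D,\top^D\rangle$ is an $\mathbf{IUL}_\omega$-algebra.
   Context: A $\mathbf{UL}$-algebra is a structure $\langle A,\wedge,\vee,\cdot,\to,e,f,\bot,\top\rangle$ such that: - it is a bounded lattice; - $\langle A,\cdot,e\rangle$ is a commutative monoid; - $xy\le z$ iff $y\le x\to z$; - for all $x,y,u,v$: $\lambda_u((x\vee y)\to x)\vee\lambda_v((x\vee y)\to y)=e$, where $\lambda_a(b)=(a\to ba)\wedge e$. An $\mathbf{IUL}_\omega$-algebra is a $\mathbf{UL}$-algebra with $\neg\neg x=x$ (where $\neg x=x\to f$) and $x\to e=x^2\to e$ for all $x$. Construction. $M$ is the submonoid of $\langle A,\cdot,e\rangle$ generated by $B$. For $a\in M$ and $b\in B$, put $(a\mapsto b]=\{c\in M: ac\le b\}$. Let $\bar D=\{(a\mapsto b]:a\in M,b\in B\}$ and $D=\{\bigcap\chi:\chi\subseteq\bar D\}$, with the empty intersection equal to $M$. For $X\subseteq M$, $C(X)$ is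 the intersection of all members of $\bar D$ containing $X$. For $b\in A$, $(b]=\{c\in M:c\le b\}$. For $X,Y\subseteq M$ and $X_i\subseteq M$: - $X\cdot^DY=C(\{xy:x\in X,y\in Y\})$; - $X\to^DY=\{a\in M: Xa\subseteq Y\}$, where $Xa=\{xa:x\in X\}$; - $\bigvee^D_iX_i=C(\bigcup_iX_i)$ and $\bigwedge^D_iX_i=\bigcap_iX_i$; - $e^D=(e]$, $f^D=(f]$, $\bot^D=(\bot]$, $\top^D=(\top]=M$; - $\sim X=X\to^D(f]$. *)

theory Defs
  imports Main
begin

record 'a ul_struct =
  carrier :: "'a set"
  meet :: "'a \<Rightarrow> 'a \<Rightarrow> 'a"
  join :: "'a \<Rightarrow> 'a \<Rightarrow> 'a"
  mult :: "'a \<Rightarrow> 'a \<Rightarrow> 'a"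
  imp  :: "'a \<Rightarrow> 'a \<Rightarrow> 'a"
  unit :: "'a"
  ff   :: "'a"
  bot  :: "'a"
  top  :: "'a"

definition leq :: "('a, 'b) ul_struct_scheme \<Rightarrow> 'a \<Rightarrow> 'a \<Rightarrow> bool" where
  "leq S x y \<longleftrightarrow> meet S x y = x"

definition bounded_lattice_on :: "('a, 'b) ul_struct_scheme \<Rightarrow> bool" where
  "bounded_lattice_on S \<longleftrightarrow>
    (\<forall>x\<in>carrier S. \<forall>y\<in>carrier S. meet S x y \<in> carrier S \<and> join S x y \<in> carrier S) \<and>
    (\<forall>x\<in>carrier S. \<forall>y\<in>carrier S. meet S x y = meet S y x \<and> join S x y = join S y x) \<and>
    (\<forall>x\<in>carrier S. \<forall>y\<in>carrier S. \<forall>z\<in>carrier S.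
        meet S (meet S x y) z = meet S x (meet S y z) \<and> join S (join S x y) z = join S x (join S y z)) \<and>
    (\<forall>x\<in>carrier S. \<forall>y\<in>carrier S. meet S x (join S x y) = x \<and> join S x (meet S x y) = x) \<and>
    bot S \<in> carrier S \<and> top S \<in> carrier S \<and>
    (\<forall>x\<in>carrier S. leq S (bot S) x \<and> leq S x (top S))"

definition comm_monoid_on :: "('a, 'b) ul_struct_scheme \<Rightarrow> bool" where
  "comm_monoid_on S \<longleftrightarrow>
    unit S \<in> carrier S \<and>
    (\<forall>x\<in>carrier S. \<forall>y\<in>carrier S. mult S x y \<in> carrier S) \<and>
    (\<forall>x\<in>carrier S. \<forall>y\<in>carrier S. \<forall>z\<in>carrier S. mult S (mult S x y) z = mult S x (mult S y z)) \<and>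
    (\<forall>x\<in>carrier S. \<forall>y\<in>carrier S. mult S x y = mult S y x) \<and>
    (\<forall>x\<in>carrier S. mult S (unit S) x = x)"

definition conj_lam :: "('a, 'b) ul_struct_scheme \<Rightarrow> 'a \<Rightarrow> 'a \<Rightarrow> 'a" where
  "conj_lam S a b = meet S (imp S a (mult S b a)) (unit S)"

definition UL_algebra :: "('a, 'b) ul_struct_scheme \<Rightarrow> bool" where
  "UL_algebra S \<longleftrightarrow>
    bounded_lattice_on S \<and> comm_monoid_on S \<and> ff S \<in> carrier S \<and>
    (\<forall>x\<in>carrier S. \<forall>y\<in>carrier S. imp S x y \<in> carrier S) \<and>
    (\<forall>x\<in>carrier S. \<forall>y\<in>carrier S. \<forall>z\<in>carrier S.
        leq S (mult S x y) z \<longleftrightarrow> leq S y (imp S x z)) \<and>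
    (\<forall>x\<in>carrier S. \<forall>y\<in>carrier S. \<forall>u\<in>carrier S. \<forall>v\<in>carrier S.
        join S (conj_lam S u (imp S (join S x y) x)) (conj_lam S v (imp S (join S x y) y)) = unit S)"

definition neg :: "('a, 'b) ul_struct_scheme \<Rightarrow> 'a \<Rightarrow> 'a" where
  "neg S x = imp S x (ff S)"

definition IUL_omega_algebra :: "('a, 'b) ul_struct_scheme \<Rightarrow> bool" where
  "IUL_omega_algebra S \<longleftrightarrow> UL_algebra S \<and>
    (\<forall>x\<in>carrier S. neg S (neg S x) = x) \<and>
    (\<forall>x\<in>carrier S. imp S x (unit S) = imp S (mult S x x) (unit S))"

definition linearly_ordered :: "('a, 'b) ul_struct_scheme \<Rightarrow> bool" where
  "linearly_ordered S \<longleftrightarrow> (\<forall>x\<in>carrier S. \<forall>y\<in>carrier S. leq S x y \<or> leq S y x)"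

inductive_set gen_monoid :: "('a, 'b) ul_struct_scheme \<Rightarrow> 'a set \<Rightarrow> 'a set"
  for S :: "('a, 'b) ul_struct_scheme" and B :: "'a set" where
  gen_unit: "unit S \<in> gen_monoid S B"
| gen_base: "b \<in> B \<Longrightarrow> b \<in> gen_monoid S B"
| gen_mult: "a \<in> gen_monoid S B \<Longrightarrow> c \<in> gen_monoid S B \<Longrightarrow> mult S a c \<in> gen_monoid S B"

text \<open>(a \<mapsto> b] = {c \<in> M. ac \<le> b}\<close>
definition rint :: "('a, 'b) ul_struct_scheme \<Rightarrow> 'a set \<Rightarrow> 'a \<Rightarrow> 'a \<Rightarrow> 'a set" where
  "rint S B a b = {c \<in> gen_monoid S B. leq S (mult S a c) b}"

definition down :: "('a, 'b) ul_struct_scheme \<Rightarrow> 'a set \<Rightarrow> 'a \<Rightarrow> 'a set" where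
  "down S B b = {c \<in> gen_monoid S B. leq S c b}"

definition Dbar :: "('a, 'b) ul_struct_scheme \<Rightarrow> 'a set \<Rightarrow> 'a set set" where
  "Dbar S B = {rint S B a b | a b. a \<in> gen_monoid S B \<and> b \<in> B}"

definition Dsets :: "('a, 'b) ul_struct_scheme \<Rightarrow> 'a set \<Rightarrow> 'a set set" where
  "Dsets S B = {gen_monoid S B \<inter> \<Inter>\<chi> | \<chi>. \<chi> \<subseteq> Dbar S B}"

definition Ccl :: "('a, 'b) ul_struct_scheme \<Rightarrow> 'a set \<Rightarrow> 'a set \<Rightarrow> 'a set" where
  "Ccl S B X = gen_monoid S B \<inter> \<Inter>{Y \<in> Dbar S B. X \<subseteq> Y}"

definition multD :: "('a, 'b) ul_struct_scheme \<Rightarrow> 'a set \<Rightarrow> 'a set \<Rightarrow> 'a set \<Rightarrow> 'a set" where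
  "multD S B X Y = Ccl S B {mult S x y | x y. x \<in> X \<and> y \<in> Y}"

definition impD :: "('a, 'b) ul_struct_scheme \<Rightarrow> 'a set \<Rightarrow> 'a set \<Rightarrow> 'a set \<Rightarrow> 'a set" where
  "impD S B X Y = {a \<in> gen_monoid S B. (\<lambda>x. mult S x a) ` X \<subseteq> Y}"

definition joinD :: "('a, 'b) ul_struct_scheme \<Rightarrow> 'a set \<Rightarrow> 'a set \<Rightarrow> 'a set \<Rightarrow> 'a set" where
  "joinD S B X Y = Ccl S B (X \<union> Y)"

definition meetD :: "'a set \<Rightarrow> 'a set \<Rightarrow> 'a set" where
  "meetD X Y = X \<inter> Y"

definition tnegD :: "('a, 'b) ul_struct_scheme \<Rightarrow> 'a set \<Rightarrow> 'a set \<Rightarrow> 'a set" where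
  "tnegD S B X = impD S B X (down S B (ff S))"

definition Dalg :: "('a, 'b) ul_struct_scheme \<Rightarrow> 'a set \<Rightarrow> 'a set ul_struct" where
  "Dalg S B = \<lparr> carrier = Dsets S B, meet = meetD, join = joinD S B,
     mult = multD S B, imp = impD S B, unit = down S B (unit S), ff = down S B (ff S),
     bot = down S B (bot S), top = down S B (top S) \<rparr>"

end

theory Submission
  imports Defs
begin

text \<open>The members of \<open>D\<close> are the \<open>C\<close>-closed subsets of \<open>M\<close>; each is downward closed
  in \<open>M\<close>, so, \<open>A\<close> being a chain, \<open>D\<close> is a chain and \<open>\<or>\<^sup>D\<close> is union. The closure is compatible
  with products, \<open>C(C(X) Z) = C(XZ)\<close>, which makes \<open>\<cdot>\<^sup>D\<close> associative and residuated by \<open>\<rightarrow>\<^sup>D\<close>.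
  Prelinearity is immediate in a chain, as one of \<open>X \<or> Y \<rightarrow> X\<close>, \<open>X \<or> Y \<rightarrow> Y\<close> is \<open>Z \<rightarrow> Z \<supseteq> e\<^sup>D\<close>.
  For the involution, \<open>a \<cdot> \<not>b\<close> lies in \<open>\<sim>(a \<mapsto> b]\<close>, which forces \<open>\<sim>\<sim>(a \<mapsto> b] \<subseteq> (a \<mapsto> b]\<close>
  because \<open>\<not>\<not>b = b\<close>; every \<open>X \<in> D\<close> is an intersection of such sets. Finally \<open>x \<rightarrow> e = x\<^sup>2 \<rightarrow> e\<close>
  lifts to \<open>D\<close> since in a chain each product \<open>xy\<close> lies below \<open>x\<^sup>2\<close> or \<open>y\<^sup>2\<close>.\<close>

locale ul_algebra =
  fixes S :: "('a, 'b) ul_struct_scheme"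
  assumes UL_algebra: "UL_algebra S"
begin

abbreviation ule :: "'a \<Rightarrow> 'a \<Rightarrow> bool" (infix "\<preceq>" 50) where
  "x \<preceq> y \<equiv> leq S x y"

abbreviation umult :: "'a \<Rightarrow> 'a \<Rightarrow> 'a" (infixl "\<odot>" 70) where
  "x \<odot> y \<equiv> mult S x y"

lemma
  shows bounded_lattice: "bounded_lattice_on S"
    and comm_monoid: "comm_monoid_on S"
    and ff_closed: "ff S \<in> carrier S"
  using UL_algebra unfolding UL_algebra_def by blast+

lemma
  assumes "x \<in> carrier S" "y \<in> carrier S"
  shows meet_closed: "meet S x y \<in> carrier S"
    and meet_join_absorb: "meet S x (join S x y) = x"
    and join_meet_absorb: "join S x (meet S x y) = x"
  using assms bounded_lattice unfolding bounded_lattice_on_def by blast+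

lemma
  assumes "x \<in> carrier S" "y \<in> carrier S"
  shows mult_closed: "x \<odot> y \<in> carrier S"
    and mult_comm: "x \<odot> y = y \<odot> x"
  using assms comm_monoid unfolding comm_monoid_on_def by blast+

lemma imp_closed: "x \<in> carrier S \<Longrightarrow> y \<in> carrier S \<Longrightarrow> imp S x y \<in> carrier S"
  using UL_algebra unfolding UL_algebra_def by blast

lemma meet_assoc:
  "x \<in> carrier S \<Longrightarrow> y \<in> carrier S \<Longrightarrow> z \<in> carrier S \<Longrightarrow> meet S (meet S x y) z = meet S x (meet S y z)"
  using bounded_lattice unfolding bounded_lattice_on_def by blast

lemma mult_assoc:
  "x \<in> carrier S \<Longrightarrow> y \<in> carrier S \<Longrightarrow> z \<in> carrier S \<Longrightarrow> x \<odot> y \<odot> z = x \<odot> (y \<odot> z)"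
  using comm_monoid unfolding comm_monoid_on_def by blast

lemma residuation:
  "x \<in> carrier S \<Longrightarrow> y \<in> carrier S \<Longrightarrow> z \<in> carrier S \<Longrightarrow> x \<odot> y \<preceq> z \<longleftrightarrow> y \<preceq> imp S x z"
  using UL_algebra unfolding UL_algebra_def by blast

lemma
  shows unit_closed: "unit S \<in> carrier S"
    and bot_closed: "bot S \<in> carrier S"
  using bounded_lattice comm_monoid unfolding bounded_lattice_on_def comm_monoid_on_def by blast+

lemma
  assumes "x \<in> carrier S"
  shows unit_mult: "unit S \<odot> x = x"
    and bot_le: "bot S \<preceq> x"
    and le_top: "x \<preceq> top S"
  using assms comm_monoid bounded_lattice
  unfolding comm_monoid_on_def bounded_lattice_on_def by blast+

lemma mult_right_commute:
  "x \<in> carrier S \<Longrightarrow> y \<in> carrier S \<Longrightarrow> z \<in> carrier S \<Longrightarrow> x \<odot> y \<odot> z = x \<odot> z \<odot> y"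
  by (simp add: mult_assoc mult_comm[of y z])

lemma le_refl: "x \<in> carrier S \<Longrightarrow> x \<preceq> x"
  unfolding leq_def by (metis join_meet_absorb meet_join_absorb meet_closed)

lemma le_trans: "x \<in> carrier S \<Longrightarrow> y \<in> carrier S \<Longrightarrow> z \<in> carrier S \<Longrightarrow> x \<preceq> y \<Longrightarrow> y \<preceq> z \<Longrightarrow> x \<preceq> z"
  unfolding leq_def by (metis meet_assoc)

lemma mult_mono_right:
  assumes "x \<in> carrier S" "y \<in> carrier S" "y' \<in> carrier S" "y \<preceq> y'"
  shows "x \<odot> y \<preceq> x \<odot> y'"
proof -
  have "y' \<preceq> imp S x (x \<odot> y')"
    using residuation le_refl assms mult_closed by blast
  then show ?thesis
    using assms le_trans residuation mult_closed imp_closed by meson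
qed

lemma mult_mono_left:
  "x \<in> carrier S \<Longrightarrow> x' \<in> carrier S \<Longrightarrow> y \<in> carrier S \<Longrightarrow> x \<preceq> x' \<Longrightarrow> x \<odot> y \<preceq> x' \<odot> y"
  by (metis mult_comm mult_mono_right)

lemma mult_imp_le:
  "x \<in> carrier S \<Longrightarrow> z \<in> carrier S \<Longrightarrow> x \<odot> imp S x z \<preceq> z"
  using residuation le_refl imp_closed by blast

lemma imp_antimono_left:
  assumes "x \<in> carrier S" "x' \<in> carrier S" "z \<in> carrier S" "x \<preceq> x'"
  shows "imp S x' z \<preceq> imp S x z"
proof -
  have "x \<odot> imp S x' z \<preceq> x' \<odot> imp S x' z"
    using assms mult_mono_left imp_closed by blast
  then have "x \<odot> imp S x' z \<preceq> z"
    using assms le_trans mult_imp_le mult_closed imp_closed by meson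
  then show ?thesis
    using assms residuation imp_closed by blast
qed

end

locale d_construction = ul_algebra +
  fixes B :: "'a set"
  assumes B_carrier: "B \<subseteq> carrier S"
begin

abbreviation M :: "'a set" where
  "M \<equiv> gen_monoid S B"

abbreviation products :: "'a set \<Rightarrow> 'a set \<Rightarrow> 'a set" where
  "products X Y \<equiv> {x \<odot> y | x y. x \<in> X \<and> y \<in> Y}"

lemma gen_monoid_carrier: "x \<in> M \<Longrightarrow> x \<in> carrier S"
  by (induction rule: gen_monoid.induct) (use unit_closed B_carrier mult_closed in auto)

lemma gen_monoid_subset_carrier: "X \<subseteq> M \<Longrightarrow> x \<in> X \<Longrightarrow> x \<in> carrier S"
  using gen_monoid_carrier by blast

lemma mem_rint: "c \<in> rint S B a b \<longleftrightarrow> c \<in> M \<and> a \<odot> c \<preceq> b"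
  unfolding rint_def by simp

lemma mem_down: "c \<in> down S B b \<longleftrightarrow> c \<in> M \<and> c \<preceq> b"
  unfolding down_def by simp

lemma mem_impD: "c \<in> impD S B X Y \<longleftrightarrow> c \<in> M \<and> (\<forall>x\<in>X. x \<odot> c \<in> Y)"
  unfolding impD_def by auto

lemma mem_Dbar: "Y \<in> Dbar S B \<longleftrightarrow> (\<exists>a\<in>M. \<exists>b\<in>B. Y = rint S B a b)"
  unfolding Dbar_def by blast

lemma mem_Ccl: "c \<in> Ccl S B X \<longleftrightarrow> c \<in> M \<and> (\<forall>a\<in>M. \<forall>b\<in>B. X \<subseteq> rint S B a b \<longrightarrow> c \<in> rint S B a b)"
  unfolding Ccl_def mem_Dbar by blast

lemma down_eq_rint_unit: "down S B b = rint S B (unit S) b"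
  unfolding down_def rint_def using unit_mult gen_monoid_carrier by auto

lemma rint_downward_closed:
  assumes a: "a \<in> M" and b: "b \<in> carrier S" and c: "c \<in> rint S B a b"
    and c': "c' \<in> M" "c' \<preceq> c"
  shows "c' \<in> rint S B a b"
proof -
  have cM: "c \<in> M" and acb: "a \<odot> c \<preceq> b"
    using c by (simp_all add: mem_rint)
  have A: "a \<in> carrier S" "c \<in> carrier S" "c' \<in> carrier S"
    using a cM c' gen_monoid_carrier by auto
  have "a \<odot> c' \<preceq> a \<odot> c"
    using mult_mono_right A c' by blast
  then have "a \<odot> c' \<preceq> b"
    using le_trans[OF _ _ b _ acb] mult_closed A by blast
  then show ?thesis
    using c' by (simp add: mem_rint)
qed

lemma Ccl_subset: "Ccl S B X \<subseteq> M"
  unfolding Ccl_def by blast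

lemma Ccl_extensive: "X \<subseteq> M \<Longrightarrow> X \<subseteq> Ccl S B X"
  by (auto simp: mem_Ccl)

lemma Ccl_mono: "X \<subseteq> Y \<Longrightarrow> Ccl S B X \<subseteq> Ccl S B Y"
  by (auto simp: mem_Ccl)

lemma Ccl_in_Dsets: "Ccl S B X \<in> Dsets S B"
  unfolding Ccl_def Dsets_def by blast

lemma Dsets_iff: "X \<in> Dsets S B \<longleftrightarrow> X \<subseteq> M \<and> Ccl S B X \<subseteq> X"
proof
  assume "X \<in> Dsets S B"
  then obtain \<chi> where "\<chi> \<subseteq> Dbar S B" "X = M \<inter> \<Inter>\<chi>"
    unfolding Dsets_def by blast
  then show "X \<subseteq> M \<and> Ccl S B X \<subseteq> X"
    unfolding Ccl_def by blast
next
  assume "X \<subseteq> M \<and> Ccl S B X \<subseteq> X"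
  then have "X = Ccl S B X"
    using Ccl_extensive by blast
  then show "X \<in> Dsets S B"
    by (metis Ccl_in_Dsets)
qed

lemma Dsets_subset: "X \<in> Dsets S B \<Longrightarrow> X \<subseteq> M"
  by (simp add: Dsets_iff)

lemma Ccl_Dsets: "X \<in> Dsets S B \<Longrightarrow> Ccl S B X = X"
  using Ccl_extensive[of X] unfolding Dsets_iff by (simp add: subset_antisym)

lemma Ccl_idem: "Ccl S B (Ccl S B X) = Ccl S B X"
  by (rule Ccl_Dsets[OF Ccl_in_Dsets])

lemma rint_in_Dsets:
  assumes "a \<in> M" "b \<in> B"
  shows "rint S B a b \<in> Dsets S B"
proof -
  have "Ccl S B (rint S B a b) \<subseteq> rint S B a b"
  proof
    fix c assume "c \<in> Ccl S B (rint S B a b)"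
    then show "c \<in> rint S B a b"
      using assms unfolding mem_Ccl by blast
  qed
  then show ?thesis
    by (simp add: Dsets_iff rint_def)
qed

lemma Dsets_downward_closed:
  assumes X: "X \<in> Dsets S B" and x: "x \<in> X" and c: "c \<in> M" "c \<preceq> x"
  shows "c \<in> X"
proof -
  have "c \<in> rint S B a b" if "a \<in> M" "b \<in> B" "X \<subseteq> rint S B a b" for a b
    using rint_downward_closed[of a b x c] that x c B_carrier by blast
  then have "c \<in> Ccl S B X"
    using c by (simp add: mem_Ccl)
  then show ?thesis
    using Ccl_Dsets[OF X] by blast
qed

lemma products_subset: "X \<subseteq> M \<Longrightarrow> Y \<subseteq> M \<Longrightarrow> products X Y \<subseteq> M"
  by (auto intro!: gen_mult)

lemma products_comm:
  assumes "X \<subseteq> M" "Y \<subseteq> M"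
  shows "products X Y = products Y X"
proof -
  have "products X Y \<subseteq> products Y X" if "X \<subseteq> M" "Y \<subseteq> M" for X Y
  proof
    fix w assume "w \<in> products X Y"
    then obtain x y where "w = x \<odot> y" "x \<in> X" "y \<in> Y"
      by blast
    moreover have "x \<odot> y = y \<odot> x"
      using calculation that mult_comm gen_monoid_subset_carrier by blast
    ultimately show "w \<in> products Y X"
      by blast
  qed
  then show ?thesis
    using assms by blast
qed

text \<open>The closure is compatible with products: every member of \<open>Dbar\<close> containing
  \<open>X \<cdot> Z\<close> yields, after shifting the factors of \<open>Z\<close> into the index \<open>a\<close>, a member of \<open>Dbar\<close>
  containing \<open>X\<close>.\<close>
lemma products_Ccl_subset:
  assumes X: "X \<subseteq> M" and Z: "Z \<subseteq> M"
  shows "products (Ccl S B X) Z \<subseteq> Ccl S B (products X Z)"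
proof
  fix w assume "w \<in> products (Ccl S B X) Z"
  then obtain c z where w: "w = c \<odot> z" and c: "c \<in> Ccl S B X" and z: "z \<in> Z"
    by blast
  have cM: "c \<in> M" and zM: "z \<in> M"
    using c z Z Ccl_subset by auto
  have wM: "w \<in> M"
    unfolding w using cM zM by (rule gen_mult)
  have "w \<in> rint S B a b"
    if a: "a \<in> M" and b: "b \<in> B" and sub: "products X Z \<subseteq> rint S B a b" for a b
  proof -
    have azM: "a \<odot> z \<in> M"
      using a zM by (rule gen_mult)
    have "X \<subseteq> rint S B (a \<odot> z) b"
    proof
      fix x assume x: "x \<in> X"
      have "x \<odot> z \<in> rint S B a b"
        using sub x z by blast
      then have "a \<odot> (x \<odot> z) \<preceq> b"
        by (simp add: mem_rint)
      moreover have "a \<odot> (x \<odot> z) = a \<odot> z \<odot> x"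
        using mult_assoc[of a x z] mult_right_commute[of a x z] a x zM X gen_monoid_carrier
        by (simp add: subset_iff)
      ultimately show "x \<in> rint S B (a \<odot> z) b"
        using x X by (auto simp: mem_rint)
    qed
    then have "c \<in> rint S B (a \<odot> z) b"
      using c azM b unfolding mem_Ccl by blast
    then have "a \<odot> z \<odot> c \<preceq> b"
      by (simp add: mem_rint)
    moreover have "a \<odot> z \<odot> c = a \<odot> w"
      using mult_assoc[of a c z] mult_right_commute[of a z c] a zM cM gen_monoid_carrier w
      by simp
    ultimately show ?thesis
      using wM by (simp add: mem_rint)
  qed
  then show "w \<in> Ccl S B (products X Z)"
    using wM by (simp add: mem_Ccl)
qed

lemma Ccl_products_Ccl:
  assumes "X \<subseteq> M" "Z \<subseteq> M"
  shows "Ccl S B (products (Ccl S B X) Z) = Ccl S B (products X Z)"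
proof
  show "Ccl S B (products (Ccl S B X) Z) \<subseteq> Ccl S B (products X Z)"
    using Ccl_mono[OF products_Ccl_subset[OF assms]] by (simp add: Ccl_idem)
  show "Ccl S B (products X Z) \<subseteq> Ccl S B (products (Ccl S B X) Z)"
    using Ccl_extensive[OF assms(1)] by (intro Ccl_mono) blast
qed

lemma multD_comm: "X \<subseteq> M \<Longrightarrow> Y \<subseteq> M \<Longrightarrow> multD S B X Y = multD S B Y X"
  unfolding multD_def using products_comm by simp

lemma multD_assoc:
  assumes X: "X \<subseteq> M" and Y: "Y \<subseteq> M" and Z: "Z \<subseteq> M"
  shows "multD S B (multD S B X Y) Z = multD S B X (multD S B Y Z)"
proof -
  have rotate: "x \<odot> y \<odot> z = y \<odot> z \<odot> x" if "x \<in> X" "y \<in> Y" "z \<in> Z" for x y z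
    using that X Y Z gen_monoid_subset_carrier mult_comm mult_right_commute by simp
  have "products (products X Y) Z = products (products Y Z) X"
  proof (intro equalityI subsetI)
    fix w assume "w \<in> products (products X Y) Z"
    then obtain x y z where "w = x \<odot> y \<odot> z" "x \<in> X" "y \<in> Y" "z \<in> Z"
      by blast
    moreover have "x \<odot> y \<odot> z = y \<odot> z \<odot> x"
      using calculation by (intro rotate)
    ultimately show "w \<in> products (products Y Z) X"
      by blast
  next
    fix w assume "w \<in> products (products Y Z) X"
    then obtain x y z where "w = y \<odot> z \<odot> x" "x \<in> X" "y \<in> Y" "z \<in> Z"
      by blast
    moreover have "x \<odot> y \<odot> z = y \<odot> z \<odot> x"
      using calculation by (intro rotate)
    ultimately show "w \<in> products (products X Y) Z"
      by (metis (mono_tags, lifting) mem_Collect_eq)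
  qed
  then show ?thesis
    unfolding multD_def Ccl_products_Ccl[OF products_subset[OF X Y] Z]
    using Ccl_products_Ccl[OF products_subset[OF Y Z] X] products_comm[OF X Ccl_subset]
    by simp
qed

lemma multD_unit:
  assumes X: "X \<in> Dsets S B"
  shows "multD S B (down S B (unit S)) X = X"
proof -
  have XM: "X \<subseteq> M"
    using X by (rule Dsets_subset)
  have "products (down S B (unit S)) X \<subseteq> X"
  proof
    fix w assume "w \<in> products (down S B (unit S)) X"
    then obtain c x where w: "w = c \<odot> x" and c: "c \<in> M" "c \<preceq> unit S" and x: "x \<in> X"
      by (auto simp: mem_down)
    have xA: "x \<in> carrier S"
      using x XM gen_monoid_subset_carrier by blast
    have "c \<odot> x \<preceq> unit S \<odot> x"
      using c xA mult_mono_left unit_closed gen_monoid_carrier by blast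
    then have "w \<preceq> x"
      using w xA unit_mult by simp
    moreover have "w \<in> M"
      unfolding w using c(1) x XM by (blast intro: gen_mult)
    ultimately show "w \<in> X"
      using Dsets_downward_closed[OF X x] by blast
  qed
  moreover have "X \<subseteq> products (down S B (unit S)) X"
  proof
    fix x assume x: "x \<in> X"
    have "unit S \<in> down S B (unit S)"
      using gen_unit le_refl unit_closed by (simp add: mem_down)
    moreover have "x = unit S \<odot> x"
      using x XM unit_mult gen_monoid_subset_carrier by simp
    ultimately show "x \<in> products (down S B (unit S)) X"
      using x by blast
  qed
  ultimately show ?thesis
    unfolding multD_def using Ccl_Dsets[OF X] by simp
qed

lemma impD_subset: "impD S B X Z \<subseteq> M"
  unfolding impD_def by blast

lemma impD_antimono: "X \<subseteq> X' \<Longrightarrow> impD S B X' Z \<subseteq> impD S B X Z"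
  unfolding impD_def by auto

lemma impD_in_Dsets:
  assumes X: "X \<subseteq> M" and Z: "Z \<in> Dsets S B"
  shows "impD S B X Z \<in> Dsets S B"
proof -
  let ?I = "impD S B X Z"
  have closed: "x \<odot> c \<in> Z" if c: "c \<in> Ccl S B ?I" and x: "x \<in> X" for c x
  proof -
    have cM: "c \<in> M" and xM: "x \<in> M"
      using c x X Ccl_subset by auto
    have "x \<odot> c \<in> rint S B a b"
      if a: "a \<in> M" and b: "b \<in> B" and sub: "Z \<subseteq> rint S B a b" for a b
    proof -
      have axM: "a \<odot> x \<in> M"
        using a xM by (rule gen_mult)
      have "?I \<subseteq> rint S B (a \<odot> x) b"
      proof
        fix c' assume c': "c' \<in> ?I"
        then have c'M: "c' \<in> M" and "x \<odot> c' \<in> rint S B a b"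
          using x sub by (auto simp: mem_impD)
        then have "a \<odot> (x \<odot> c') \<preceq> b"
          by (simp add: mem_rint)
        then show "c' \<in> rint S B (a \<odot> x) b"
          using mult_assoc[of a x c'] a xM c'M gen_monoid_carrier by (simp add: mem_rint)
      qed
      then have "c \<in> rint S B (a \<odot> x) b"
        using c axM b unfolding mem_Ccl by blast
      then show ?thesis
        using mult_assoc[of a x c] a xM cM gen_monoid_carrier gen_mult[OF xM cM]
        by (simp add: mem_rint)
    qed
    then have "x \<odot> c \<in> Ccl S B Z"
      using gen_mult[OF xM cM] by (simp add: mem_Ccl)
    then show ?thesis
      using Ccl_Dsets[OF Z] by blast
  qed
  have "Ccl S B ?I \<subseteq> ?I"
  proof
    fix c assume c: "c \<in> Ccl S B ?I"
    then have "c \<in> M"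
      using Ccl_subset by blast
    with c show "c \<in> ?I"
      using closed by (simp add: mem_impD)
  qed
  then show ?thesis
    using impD_subset by (simp add: Dsets_iff)
qed

lemma impD_Ccl:
  assumes W: "W \<subseteq> M" and Z: "Z \<in> Dsets S B"
  shows "impD S B (Ccl S B W) Z = impD S B W Z"
proof
  show "impD S B (Ccl S B W) Z \<subseteq> impD S B W Z"
    by (rule impD_antimono[OF Ccl_extensive[OF W]])
  show "impD S B W Z \<subseteq> impD S B (Ccl S B W) Z"
  proof
    fix c assume c: "c \<in> impD S B W Z"
    then have cM: "c \<in> M"
      by (simp add: mem_impD)
    have comm: "x \<odot> c = c \<odot> x" if "x \<in> M" for x
      using that cM gen_monoid_carrier mult_comm by blast
    have "W \<subseteq> impD S B {c} Z"
    proof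
      fix x assume x: "x \<in> W"
      then have xM: "x \<in> M"
        using W by blast
      have "c \<odot> x \<in> Z"
        using c x comm[OF xM, symmetric] by (simp add: mem_impD)
      with xM show "x \<in> impD S B {c} Z"
        by (simp add: mem_impD)
    qed
    then have "Ccl S B W \<subseteq> impD S B {c} Z"
      using Ccl_mono Ccl_Dsets[OF impD_in_Dsets[OF _ Z]] cM by (metis empty_subsetI insert_subset)
    moreover have "x \<in> M" if "x \<in> Ccl S B W" for x
      using that Ccl_subset by blast
    ultimately show "c \<in> impD S B (Ccl S B W) Z"
      using cM comm by (auto simp: mem_impD)
  qed
qed

lemma multD_subset_iff:
  assumes X: "X \<subseteq> M" and Y: "Y \<subseteq> M" and Z: "Z \<in> Dsets S B"
  shows "multD S B X Y \<subseteq> Z \<longleftrightarrow> Y \<subseteq> impD S B X Z"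
proof -
  have "multD S B X Y \<subseteq> Z \<longleftrightarrow> products X Y \<subseteq> Z"
    unfolding multD_def
    using Ccl_extensive[OF products_subset[OF X Y]] Ccl_mono[of "products X Y" Z] Ccl_Dsets[OF Z]
    by blast
  also have "\<dots> \<longleftrightarrow> Y \<subseteq> impD S B X Z"
    unfolding subset_iff mem_impD using Y by blast
  finally show ?thesis .
qed

lemma down_in_Dsets: "b \<in> B \<Longrightarrow> down S B b \<in> Dsets S B"
  by (simp add: down_eq_rint_unit rint_in_Dsets gen_unit)

lemma down_top: "down S B (top S) = M"
  unfolding down_def using le_top gen_monoid_carrier by blast

lemma down_bot_subset:
  assumes X: "X \<in> Dsets S B"
  shows "down S B (bot S) \<subseteq> X"
proof
  fix c assume "c \<in> down S B (bot S)"
  then have cM: "c \<in> M" and c_bot: "c \<preceq> bot S"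
    by (simp_all add: mem_down)
  have "c \<in> rint S B a b" if a: "a \<in> M" and b: "b \<in> B" for a b
  proof -
    have A: "a \<in> carrier S" "b \<in> carrier S" "c \<in> carrier S"
      using a b cM B_carrier gen_monoid_carrier by auto
    have "c \<preceq> imp S a b"
      using le_trans[OF _ bot_closed _ c_bot bot_le] A imp_closed by blast
    then show ?thesis
      using residuation A cM by (simp add: mem_rint)
  qed
  then have "c \<in> Ccl S B X"
    using cM by (simp add: mem_Ccl)
  then show "c \<in> X"
    using Ccl_Dsets[OF X] by blast
qed

lemma unit_down_subset_impD_self:
  assumes X: "X \<in> Dsets S B"
  shows "down S B (unit S) \<subseteq> impD S B X X"
proof
  fix c assume "c \<in> down S B (unit S)"
  then have cM: "c \<in> M" and c_unit: "c \<preceq> unit S"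
    by (simp_all add: mem_down)
  have "x \<odot> c \<in> X" if x: "x \<in> X" for x
  proof -
    have xM: "x \<in> M"
      using x Dsets_subset[OF X] by blast
    have A: "x \<in> carrier S" "c \<in> carrier S"
      using xM cM gen_monoid_carrier by auto
    have "x \<odot> c \<preceq> x"
      using mult_mono_right[OF A(1) A(2) unit_closed c_unit]
      by (simp add: mult_comm[OF A(1) unit_closed] unit_mult[OF A(1)])
    then show ?thesis
      using Dsets_downward_closed[OF X x gen_mult[OF xM cM]] by blast
  qed
  then show "c \<in> impD S B X X"
    using cM by (simp add: mem_impD)
qed

lemma tnegD_subset: "tnegD S B X \<subseteq> M"
  unfolding tnegD_def by (rule impD_subset)

lemma tnegD_antimono: "X \<subseteq> Y \<Longrightarrow> tnegD S B Y \<subseteq> tnegD S B X"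
  unfolding tnegD_def by (rule impD_antimono)

lemma mem_tnegD: "X \<subseteq> M \<Longrightarrow> c \<in> tnegD S B X \<longleftrightarrow> c \<in> M \<and> (\<forall>x\<in>X. x \<odot> c \<preceq> ff S)"
  unfolding tnegD_def mem_impD mem_down by (auto intro: gen_mult)

lemma subset_double_tnegD:
  assumes X: "X \<subseteq> M"
  shows "X \<subseteq> tnegD S B (tnegD S B X)"
proof
  fix d assume d: "d \<in> X"
  have "c \<odot> d \<preceq> ff S" if c: "c \<in> tnegD S B X" for c
  proof -
    have "d \<odot> c \<preceq> ff S"
      using c d X by (simp add: mem_tnegD)
    moreover have "d \<odot> c = c \<odot> d"
      using c d X tnegD_subset gen_monoid_carrier mult_comm by (meson subsetD)
    ultimately show ?thesis
      by simp
  qed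
  then show "d \<in> tnegD S B (tnegD S B X)"
    using d X by (simp add: mem_tnegD[OF tnegD_subset] subset_iff)
qed

lemma Int_in_Dsets: "X \<in> Dsets S B \<Longrightarrow> Y \<in> Dsets S B \<Longrightarrow> X \<inter> Y \<in> Dsets S B"
  unfolding Dsets_iff using Ccl_mono[of "X \<inter> Y"] by blast

lemma Dalg_simps:
  "carrier (Dalg S B) = Dsets S B" "meet (Dalg S B) = meetD" "join (Dalg S B) = joinD S B"
  "mult (Dalg S B) = multD S B" "imp (Dalg S B) = impD S B" "unit (Dalg S B) = down S B (unit S)"
  "ff (Dalg S B) = down S B (ff S)" "bot (Dalg S B) = down S B (bot S)"
  "top (Dalg S B) = down S B (top S)"
  by (simp_all add: Dalg_def)

lemma leq_Dalg: "leq (Dalg S B) X Y \<longleftrightarrow> X \<subseteq> Y"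
  unfolding leq_def Dalg_simps meetD_def by blast

lemma conj_lam_Dalg_subset: "conj_lam (Dalg S B) U W \<subseteq> down S B (unit S)"
  unfolding conj_lam_def Dalg_simps meetD_def by blast

lemma conj_lam_Dalg_eq_unit:
  assumes U: "U \<subseteq> M" and W: "W \<subseteq> M" and unit_W: "down S B (unit S) \<subseteq> W"
  shows "conj_lam (Dalg S B) U W = down S B (unit S)"
proof -
  have "down S B (unit S) \<subseteq> impD S B U (multD S B W U)"
  proof
    fix c assume c: "c \<in> down S B (unit S)"
    then have cM: "c \<in> M"
      by (simp add: mem_down)
    have "x \<odot> c \<in> multD S B W U" if x: "x \<in> U" for x
    proof -
      have "x \<odot> c = c \<odot> x"
        using x U cM gen_monoid_carrier mult_comm by blast
      moreover have "c \<odot> x \<in> products W U"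
        using c unit_W x by blast
      ultimately show ?thesis
        unfolding multD_def using Ccl_extensive[OF products_subset[OF W U]] by auto
    qed
    then show "c \<in> impD S B U (multD S B W U)"
      using cM by (simp add: mem_impD)
  qed
  then show ?thesis
    unfolding conj_lam_def Dalg_simps meetD_def by blast
qed

lemma mem_impD_down_unit:
  assumes X: "X \<subseteq> M"
  shows "c \<in> impD S B X (down S B (unit S)) \<longleftrightarrow> c \<in> M \<and> (\<forall>x\<in>X. c \<preceq> imp S x (unit S))"
proof -
  have "x \<odot> c \<in> down S B (unit S) \<longleftrightarrow> c \<preceq> imp S x (unit S)" if "x \<in> X" "c \<in> M" for x c
  proof -
    have xM: "x \<in> M"
      using that X by blast
    then show ?thesis
      using residuation[of x c "unit S"] gen_monoid_carrier that(2) unit_closed gen_mult[OF xM that(2)]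
      by (simp add: mem_down)
  qed
  then show ?thesis
    by (auto simp: mem_impD)
qed

end

locale chain_d_construction = d_construction +
  assumes linear: "linearly_ordered S"
begin

lemma le_total: "x \<in> carrier S \<Longrightarrow> y \<in> carrier S \<Longrightarrow> x \<preceq> y \<or> y \<preceq> x"
  using linear unfolding linearly_ordered_def by blast

lemma Dsets_chain:
  assumes X: "X \<in> Dsets S B" and Y: "Y \<in> Dsets S B"
  shows "X \<subseteq> Y \<or> Y \<subseteq> X"
proof (rule ccontr)
  assume "\<not> (X \<subseteq> Y \<or> Y \<subseteq> X)"
  then obtain x y where xy: "x \<in> X" "x \<notin> Y" "y \<in> Y" "y \<notin> X"
    by blast
  then have "x \<in> M" "y \<in> M"
    using X Y Dsets_subset by blast+
  then show False
    using le_total gen_monoid_carrier Dsets_downward_closed[OF X xy(1)]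
      Dsets_downward_closed[OF Y xy(3)] xy by metis
qed

lemma Un_in_Dsets: "X \<in> Dsets S B \<Longrightarrow> Y \<in> Dsets S B \<Longrightarrow> X \<union> Y \<in> Dsets S B"
  using Dsets_chain by (metis sup.absorb1 sup.absorb2)

lemma joinD_eq_Un:
  assumes X: "X \<in> Dsets S B" and Y: "Y \<in> Dsets S B"
  shows "joinD S B X Y = X \<union> Y"
  unfolding joinD_def using Un_in_Dsets[OF X Y] by (rule Ccl_Dsets)

lemma mult_le_square:
  assumes "x \<in> carrier S" "y \<in> carrier S"
  shows "x \<odot> y \<preceq> x \<odot> x \<or> x \<odot> y \<preceq> y \<odot> y"
  using le_total[OF assms] mult_mono_left[of x y y] mult_mono_right[of x y x] assms
  by (metis mult_comm)

end

locale iul_chain_construction = chain_d_construction +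
  assumes IUL_omega: "IUL_omega_algebra S"
    and constants_B: "{unit S, ff S, bot S, top S} \<subseteq> B"
    and neg_B: "\<forall>b\<in>B. neg S b \<in> B"
begin

lemma double_neg: "x \<in> carrier S \<Longrightarrow> imp S (imp S x (ff S)) (ff S) = x"
  using IUL_omega unfolding IUL_omega_algebra_def neg_def by blast

lemma imp_unit_square: "x \<in> carrier S \<Longrightarrow> imp S x (unit S) = imp S (x \<odot> x) (unit S)"
  using IUL_omega unfolding IUL_omega_algebra_def by blast

text \<open>The witness \<open>a \<cdot> \<not>b \<in> \<sim>(a \<mapsto> b]\<close> shows that any \<open>d \<in> \<sim>\<sim>(a \<mapsto> b]\<close> has
  \<open>\<not>b \<cdot> ad \<le> f\<close>, i.e. \<open>ad \<le> \<not>\<not>b = b\<close>.\<close>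
lemma double_tnegD_rint_subset:
  assumes a: "a \<in> M" and b: "b \<in> B"
  shows "tnegD S B (tnegD S B (rint S B a b)) \<subseteq> rint S B a b"
proof
  fix d assume d: "d \<in> tnegD S B (tnegD S B (rint S B a b))"
  define nb where "nb = imp S b (ff S)"
  have nb_B: "nb \<in> B"
    using neg_B b unfolding nb_def neg_def by blast
  have A: "a \<in> carrier S" "b \<in> carrier S" "nb \<in> carrier S"
    using a b nb_B B_carrier gen_monoid_carrier by auto
  have b_nb: "b \<odot> nb \<preceq> ff S"
    unfolding nb_def using mult_imp_le A ff_closed by blast
  have rint_M: "rint S B a b \<subseteq> M"
    unfolding rint_def by blast
  have witness: "a \<odot> nb \<in> tnegD S B (rint S B a b)"
    unfolding mem_tnegD[OF rint_M]
  proof (intro conjI ballI)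
    show "a \<odot> nb \<in> M"
      using a gen_base[OF nb_B] by (rule gen_mult)
    fix x assume "x \<in> rint S B a b"
    then have xA: "x \<in> carrier S" and ax_b: "a \<odot> x \<preceq> b"
      using gen_monoid_carrier by (auto simp: mem_rint)
    have "x \<odot> (a \<odot> nb) = a \<odot> x \<odot> nb"
      using mult_assoc[of x a nb, symmetric] mult_comm[of x a] A xA by simp
    moreover have "a \<odot> x \<odot> nb \<preceq> b \<odot> nb"
      using mult_mono_left ax_b A xA mult_closed by blast
    ultimately show "x \<odot> (a \<odot> nb) \<preceq> ff S"
      using le_trans b_nb A xA mult_closed ff_closed by metis
  qed
  have dM: "d \<in> M"
    using d tnegD_subset by blast
  then have dA: "d \<in> carrier S"
    by (rule gen_monoid_carrier)
  have "a \<odot> nb \<odot> d \<preceq> ff S"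
    using d witness by (simp add: mem_tnegD[OF tnegD_subset])
  moreover have "a \<odot> nb \<odot> d = nb \<odot> (a \<odot> d)"
    using mult_assoc[of a nb d] mult_assoc[of nb a d] mult_comm[of a nb] A dA by simp
  ultimately have "a \<odot> d \<preceq> imp S nb (ff S)"
    using residuation A dA mult_closed ff_closed by simp
  then show "d \<in> rint S B a b"
    using dM double_neg A by (simp add: nb_def mem_rint)
qed

lemma double_tnegD_rint:
  "a \<in> M \<Longrightarrow> b \<in> B \<Longrightarrow> rint S B a b = tnegD S B (tnegD S B (rint S B a b))"
  using double_tnegD_rint_subset subset_double_tnegD[of "rint S B a b"]
  unfolding rint_def by blast

text \<open>Every \<open>X \<in> D\<close> is an intersection of sets \<open>(a \<mapsto> b]\<close>, each of which is stable under \<open>\<sim>\<sim>\<close>.\<close>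
lemma double_tnegD_Dsets:
  assumes X: "X \<in> Dsets S B"
  shows "X = tnegD S B (tnegD S B X)"
proof
  show "X \<subseteq> tnegD S B (tnegD S B X)"
    using X Dsets_subset subset_double_tnegD by blast
  show "tnegD S B (tnegD S B X) \<subseteq> X"
  proof
    fix c assume c: "c \<in> tnegD S B (tnegD S B X)"
    have "c \<in> rint S B a b" if "a \<in> M" "b \<in> B" "X \<subseteq> rint S B a b" for a b
      using c tnegD_antimono[OF tnegD_antimono[OF that(3)]] double_tnegD_rint_subset[OF that(1,2)]
      by blast
    then have "c \<in> Ccl S B X"
      using c tnegD_subset by (auto simp: mem_Ccl)
    then show "c \<in> X"
      using Ccl_Dsets[OF X] by blast
  qed
qed

text \<open>For \<open>x \<le> y\<close> in \<open>X\<close> we have \<open>xy \<le> y\<^sup>2\<close> and \<open>y\<^sup>2 \<rightarrow> e = y \<rightarrow> e\<close>, so the squares of \<open>X\<close>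
  already control \<open>X \<cdot> X \<rightarrow> e\<close>.\<close>
lemma impD_unit_square:
  assumes X: "X \<in> Dsets S B"
  shows "impD S B X (down S B (unit S)) = impD S B (multD S B X X) (down S B (unit S))"
proof -
  have XM: "X \<subseteq> M"
    using X by (rule Dsets_subset)
  have unit_D: "down S B (unit S) \<in> Dsets S B"
    using constants_B down_in_Dsets by blast
  have "c \<preceq> imp S w (unit S)"
    if c: "c \<in> M" "\<forall>x\<in>X. c \<preceq> imp S x (unit S)" and w: "w \<in> products X X" for c w
  proof -
    obtain x y where w_xy: "w = x \<odot> y" and xy: "x \<in> X" "y \<in> X"
      using w by blast
    have A: "x \<in> carrier S" "y \<in> carrier S" "c \<in> carrier S"
      using xy c XM gen_monoid_carrier by auto
    obtain z where z: "z \<in> X" "w \<preceq> z \<odot> z"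
      using mult_le_square[OF A(1,2)] w_xy xy by blast
    have zA: "z \<in> carrier S" and wA: "w \<in> carrier S"
      using z XM w_xy A gen_monoid_carrier mult_closed by auto
    have "c \<preceq> imp S z (unit S)"
      using c(2) z(1) by blast
    then have "c \<preceq> imp S (z \<odot> z) (unit S)"
      using imp_unit_square[OF zA] by simp
    moreover have "imp S (z \<odot> z) (unit S) \<preceq> imp S w (unit S)"
      using imp_antimono_left[OF wA mult_closed[OF zA zA] unit_closed z(2)] .
    ultimately show ?thesis
      using le_trans[OF A(3) imp_closed[OF mult_closed[OF zA zA] unit_closed]
          imp_closed[OF wA unit_closed]] by blast
  qed
  moreover have "c \<preceq> imp S x (unit S)"
    if "\<forall>w\<in>products X X. c \<preceq> imp S w (unit S)" and x: "x \<in> X" for c x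
  proof -
    have "c \<preceq> imp S (x \<odot> x) (unit S)"
      using that by blast
    then show ?thesis
      using imp_unit_square x XM gen_monoid_carrier by auto
  qed
  ultimately have "impD S B X (down S B (unit S)) = impD S B (products X X) (down S B (unit S))"
    unfolding set_eq_iff mem_impD_down_unit[OF XM] mem_impD_down_unit[OF products_subset[OF XM XM]]
    by blast
  then show ?thesis
    unfolding multD_def using impD_Ccl[OF products_subset[OF XM XM] unit_D] by simp
qed

lemma unit_down_in_Dsets: "down S B (unit S) \<in> Dsets S B"
  using constants_B down_in_Dsets by blast

lemma bounded_lattice_Dalg: "bounded_lattice_on (Dalg S B)"
  unfolding bounded_lattice_on_def Dalg_simps leq_Dalg meetD_def
proof (intro conjI ballI)
  fix X Y assume X: "X \<in> Dsets S B" and Y: "Y \<in> Dsets S B"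
  show "X \<inter> Y \<in> Dsets S B"
    using X Y by (rule Int_in_Dsets)
  show "joinD S B X Y \<in> Dsets S B"
    unfolding joinD_def by (rule Ccl_in_Dsets)
  show "X \<inter> Y = Y \<inter> X" "joinD S B X Y = joinD S B Y X"
    unfolding joinD_def by (simp_all add: Int_commute Un_commute)
  show "X \<inter> joinD S B X Y = X"
    using joinD_eq_Un[OF X Y] by blast
  show "joinD S B X (X \<inter> Y) = X"
    using joinD_eq_Un[OF X Int_in_Dsets[OF X Y]] by blast
  fix Z assume Z: "Z \<in> Dsets S B"
  show "X \<inter> Y \<inter> Z = X \<inter> (Y \<inter> Z)"
    by blast
  show "joinD S B (joinD S B X Y) Z = joinD S B X (joinD S B Y Z)"
    by (simp add: joinD_eq_Un X Y Z Un_in_Dsets Un_assoc)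
next
  show "down S B (bot S) \<in> Dsets S B" "down S B (top S) \<in> Dsets S B"
    using constants_B down_in_Dsets by auto
  fix X assume X: "X \<in> Dsets S B"
  show "down S B (bot S) \<subseteq> X"
    using X by (rule down_bot_subset)
  show "X \<subseteq> down S B (top S)"
    using X Dsets_subset down_top by simp
qed

lemma comm_monoid_Dalg: "comm_monoid_on (Dalg S B)"
  unfolding comm_monoid_on_def Dalg_simps
proof (intro conjI ballI)
  show "down S B (unit S) \<in> Dsets S B"
    by (rule unit_down_in_Dsets)
  fix X Y assume X: "X \<in> Dsets S B" and Y: "Y \<in> Dsets S B"
  show "multD S B X Y \<in> Dsets S B"
    unfolding multD_def by (rule Ccl_in_Dsets)
  show "multD S B X Y = multD S B Y X"
    using multD_comm[OF Dsets_subset[OF X] Dsets_subset[OF Y]] .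
  fix Z assume "Z \<in> Dsets S B"
  then show "multD S B (multD S B X Y) Z = multD S B X (multD S B Y Z)"
    using multD_assoc[OF Dsets_subset[OF X] Dsets_subset[OF Y] Dsets_subset] by blast
next
  fix X assume "X \<in> Dsets S B"
  then show "multD S B (down S B (unit S)) X = X"
    by (rule multD_unit)
qed

text \<open>Since \<open>D\<close> is a chain, one of \<open>X \<vee> Y \<rightarrow> X\<close>, \<open>X \<vee> Y \<rightarrow> Y\<close> is \<open>X \<rightarrow> X \<supseteq> e\<close>, and its
  conjugate is then \<open>e\<close>.\<close>
lemma prelinearity_Dalg:
  assumes X: "X \<in> Dsets S B" and Y: "Y \<in> Dsets S B" and U: "U \<in> Dsets S B" and V: "V \<in> Dsets S B"
  shows "joinD S B (conj_lam (Dalg S B) U (impD S B (joinD S B X Y) X))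
                   (conj_lam (Dalg S B) V (impD S B (joinD S B X Y) Y)) = down S B (unit S)"
proof -
  have self_lam: "conj_lam (Dalg S B) W (impD S B Z Z) = down S B (unit S)"
    if "W \<in> Dsets S B" "Z \<in> Dsets S B" for W Z
    using conj_lam_Dalg_eq_unit[OF Dsets_subset[OF that(1)] impD_subset
        unit_down_subset_impD_self[OF that(2)]] .
  have unit_absorb: "joinD S B (down S B (unit S)) L = down S B (unit S)"
    "joinD S B L (down S B (unit S)) = down S B (unit S)"
    if "L \<subseteq> down S B (unit S)" for L
    using that Ccl_Dsets[OF unit_down_in_Dsets] unfolding joinD_def
    by (simp_all add: Un_absorb2 Un_absorb1)
  consider "joinD S B X Y = X" | "joinD S B X Y = Y"
    using Dsets_chain[OF X Y] joinD_eq_Un[OF X Y] by blast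
  then show ?thesis
  proof cases
    case 1
    then show ?thesis
      using self_lam[OF U X] unit_absorb(1)[OF conj_lam_Dalg_subset] by simp
  next
    case 2
    then show ?thesis
      using self_lam[OF V Y] unit_absorb(2)[OF conj_lam_Dalg_subset] by simp
  qed
qed

lemma IUL_omega_algebra_Dalg: "IUL_omega_algebra (Dalg S B)"
  unfolding IUL_omega_algebra_def UL_algebra_def neg_def Dalg_simps leq_Dalg
proof (intro conjI ballI bounded_lattice_Dalg comm_monoid_Dalg)
  show "down S B (ff S) \<in> Dsets S B"
    using constants_B down_in_Dsets by blast
  fix X Y assume X: "X \<in> Dsets S B" and Y: "Y \<in> Dsets S B"
  show "impD S B X Y \<in> Dsets S B"
    using impD_in_Dsets[OF Dsets_subset[OF X] Y] .
  fix Z assume "Z \<in> Dsets S B"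
  then show "multD S B X Y \<subseteq> Z \<longleftrightarrow> Y \<subseteq> impD S B X Z"
    by (rule multD_subset_iff[OF Dsets_subset[OF X] Dsets_subset[OF Y]])
next
  fix X Y U V assume "X \<in> Dsets S B" "Y \<in> Dsets S B" "U \<in> Dsets S B" "V \<in> Dsets S B"
  then show "joinD S B (conj_lam (Dalg S B) U (impD S B (joinD S B X Y) X))
                       (conj_lam (Dalg S B) V (impD S B (joinD S B X Y) Y)) = down S B (unit S)"
    by (rule prelinearity_Dalg)
next
  fix X assume X: "X \<in> Dsets S B"
  then show "impD S B (impD S B X (down S B (ff S))) (down S B (ff S)) = X"
    using double_tnegD_Dsets unfolding tnegD_def by metis
  show "impD S B X (down S B (unit S)) = impD S B (multD S B X X) (down S B (unit S))"
    using X by (rule impD_unit_square)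
qed

end

theorem lemma3p9:
  fixes S :: "'a ul_struct" and B :: "'a set"
  assumes "IUL_omega_algebra S" and "linearly_ordered S"
    and "B \<subseteq> carrier S"
    and "{unit S, ff S, bot S, top S} \<subseteq> B"
    and "\<forall>b\<in>B. neg S b \<in> B"
  shows "(\<forall>b\<in>B. down S B b = tnegD S B (tnegD S B (down S B b)))
    \<and> (\<forall>a\<in>gen_monoid S B. \<forall>b\<in>B. rint S B a b = tnegD S B (tnegD S B (rint S B a b)))
    \<and> (\<forall>X\<in>Dsets S B. X = tnegD S B (tnegD S B X))
    \<and> IUL_omega_algebra (Dalg S B)"
proof -
  have UL: "UL_algebra S"
    using assms(1) unfolding IUL_omega_algebra_def by blast
  interpret iul_chain_construction S B
    by unfold_locales (use UL assms in blast)+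
  show ?thesis
  proof (intro conjI ballI)
    fix b assume "b \<in> B"
    then show "down S B b = tnegD S B (tnegD S B (down S B b))"
      unfolding down_eq_rint_unit by (rule double_tnegD_rint[OF gen_unit])
  next
    fix a b assume "a \<in> gen_monoid S B" "b \<in> B"
    then show "rint S B a b = tnegD S B (tnegD S B (rint S B a b))"
      by (rule double_tnegD_rint)
  next
    fix X assume "X \<in> Dsets S B"
    then show "X = tnegD S B (tnegD S B X)"
      by (rule double_tnegD_Dsets)
  qed (rule IUL_omega_algebra_Dalg)
qed

end
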